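(* Let $A\in\mathbb{R}^{d\times d}$, $N\ge1$, real coefficients $h_{k,j}$ ($1\le k\le N$, $0\le j\le k-1$), and $x_{k+1}=x_k-\sum_{j=0}^k h_{k+1,j}Ax_j$ for $k=0,\dots,N-1$. Then for $k=1,\dots,N$, \[ x_k=\sum_{m=0}^{k}(-1)^mP(k,m)A^mx_0, \] where $P(k,0)=1$ and, for $1\le m\le k$, $P(k,m)=\sum\prod_{\ell=1}^m h_{i(\ell),j(\ell)}$, the sum ranging over all integer sequences $(i(1),j(1)),\dots,(i(m),j(m))$ with $0\le j(\ell)<i(\ell)$ for all $\ell$, $i(\ell)\le j(\ell+1)$ for $\ell=1,\dots,m-1$, and $i(m)\le k$. *)

theory Defs
  imports "HOL-Analysis.Analysis"
begin

text \<open>Matrix power with respect to matrix multiplication (the ring power on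
  vec types is componentwise, so we define it explicitly).\<close>
primrec matrix_pow :: "real^'n^'n \<Rightarrow> nat \<Rightarrow> real^'n^'n" where
  "matrix_pow A 0 = mat 1"
| "matrix_pow A (Suc m) = A ** matrix_pow A m"

text \<open>Admissible index sequences (i(1),j(1)),...,(i(m),j(m)), stored as a list of
  pairs (i,j) (list position l corresponds to index l+1).\<close>
definition P_seqs :: "nat \<Rightarrow> nat \<Rightarrow> (nat \<times> nat) list set" where
  "P_seqs k m = {ps. length ps = m
      \<and> (\<forall>l<m. snd (ps ! l) < fst (ps ! l))
      \<and> (\<forall>l. l + 1 < m \<longrightarrow> fst (ps ! l) \<le> snd (ps ! (l + 1)))
      \<and> fst (ps ! (m - 1)) \<le> k}"

definition P_coef :: "(nat \<Rightarrow> nat \<Rightarrow> real) \<Rightarrow> nat \<Rightarrow> nat \<Rightarrow> real" where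
  "P_coef h k m = (if m = 0 then 1
     else (\<Sum>ps\<in>P_seqs k m. \<Prod>l<m. h (fst (ps ! l)) (snd (ps ! l))))"

end

theory Submission
  imports Defs
begin

text \<open>Deleting the last pair \<open>(i, j)\<close> of an admissible sequence for \<open>P(k, m + 1)\<close>
  leaves an admissible sequence for \<open>P(j, m)\<close>, so
  \<open>P(k, m + 1) = (\<Sum>i\<le>k. \<Sum>j<i. h(i, j) P(j, m))\<close>.
  Summing the recurrence gives \<open>x k = x 0 - (\<Sum>i\<le>k. \<Sum>j<i. h(i, j) A x j)\<close>; inserting the
  formula for the \<open>x j\<close> with \<open>j < k\<close>, the coefficient of \<open>A\<^sup>m\<^sup>+\<^sup>1 x 0\<close> becomes exactly this
  expression for \<open>-(-1)\<^sup>m P(k, m + 1)\<close>.\<close>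

text \<open>\<^term>\<open>P_seqs k 0\<close> depends on the junk value \<^term>\<open>[] ! 0\<close>, so the empty sequence is
  supplied by hand.\<close>
definition index_seqs :: "nat \<Rightarrow> nat \<Rightarrow> (nat \<times> nat) list set" where
  "index_seqs k m = (if m = 0 then {[]} else P_seqs k m)"

lemma length_index_seqs: "ps \<in> index_seqs k m \<Longrightarrow> length ps = m"
  by (auto simp: index_seqs_def P_seqs_def split: if_splits)

lemma P_coef_0 [simp]: "P_coef h k 0 = 1"
  by (simp add: P_coef_def)

lemma P_coef_eq_sum_index_seqs:
  "P_coef h k m = (\<Sum>ps\<in>index_seqs k m. \<Prod>(i, j)\<leftarrow>ps. h i j)"
proof -
  have "(\<Prod>(i, j)\<leftarrow>ps. h i j) = (\<Prod>l<m. h (fst (ps ! l)) (snd (ps ! l)))"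
    if "ps \<in> index_seqs k m" for ps
    using length_index_seqs[OF that]
    by (simp add: prod.list_conv_set_nth atLeast0LessThan case_prod_beta)
  then show ?thesis
    by (auto simp: P_coef_def index_seqs_def intro!: sum.cong)
qed

lemma snoc_in_P_seqs_iff:
  "qs @ [(i, j)] \<in> P_seqs k (Suc m) \<longleftrightarrow> qs \<in> index_seqs j m \<and> j < i \<and> i \<le> k"
proof (cases m)
  case 0
  then show ?thesis by (auto simp: P_seqs_def index_seqs_def)
next
  case (Suc m')
  have chain_snoc: "(\<forall>l. l + 1 < Suc m \<longrightarrow> fst ((qs @ [(i, j)]) ! l) \<le> snd ((qs @ [(i, j)]) ! (l + 1)))
    \<longleftrightarrow> (\<forall>l. l + 1 < m \<longrightarrow> fst (qs ! l) \<le> snd (qs ! (l + 1))) \<and> fst (qs ! m') \<le> j"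
    if "length qs = m"
    using that Suc by (auto simp: nth_append less_Suc_eq)
  then show ?thesis
    using Suc by (auto simp: P_seqs_def index_seqs_def nth_append less_Suc_eq)
qed

lemma P_seqs_Suc:
  "P_seqs k (Suc m) = (\<Union>i\<le>k. \<Union>j<i. (\<lambda>qs. qs @ [(i, j)]) ` index_seqs j m)"
proof (intro equalityI subsetI)
  fix ps assume ps: "ps \<in> P_seqs k (Suc m)"
  then have "ps \<noteq> []" by (auto simp: P_seqs_def)
  then obtain qs i j where "ps = qs @ [(i, j)]"
    by (metis prod.collapse rev_exhaust)
  with ps show "ps \<in> (\<Union>i\<le>k. \<Union>j<i. (\<lambda>qs. qs @ [(i, j)]) ` index_seqs j m)"
    by (auto simp: snoc_in_P_seqs_iff)
qed (auto simp: snoc_in_P_seqs_iff)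

lemma finite_index_seqs: "finite (index_seqs k m)"
proof (induction m arbitrary: k)
  case 0
  then show ?case by (simp add: index_seqs_def)
next
  case (Suc m)
  then show ?case by (simp add: index_seqs_def P_seqs_Suc)
qed

lemma P_coef_Suc: "P_coef h k (Suc m) = (\<Sum>i\<le>k. \<Sum>j<i. h i j * P_coef h j m)"
proof -
  let ?w = "\<lambda>ps. \<Prod>(i, j)\<leftarrow>ps. h i j"
  let ?B = "\<lambda>i j. (\<lambda>qs. qs @ [(i, j)]) ` index_seqs j m"
  have "P_coef h k (Suc m) = sum ?w (\<Union>i\<le>k. \<Union>j<i. ?B i j)"
    by (simp add: P_coef_eq_sum_index_seqs index_seqs_def P_seqs_Suc)
  also have "\<dots> = (\<Sum>i\<le>k. \<Sum>j<i. sum ?w (?B i j))"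
    by (subst sum.UNION_disjoint)
      (auto simp: finite_index_seqs intro!: sum.cong sum.UNION_disjoint)
  also have "\<dots> = (\<Sum>i\<le>k. \<Sum>j<i. h i j * P_coef h j m)"
    by (simp add: sum.reindex inj_on_def P_coef_eq_sum_index_seqs sum_distrib_left mult.commute)
  finally show ?thesis .
qed

lemma recurrence_telescoped:
  fixes f :: "'a::real_vector \<Rightarrow> 'a" and x :: "nat \<Rightarrow> 'a"
  assumes rec: "\<And>k. k < N \<Longrightarrow> x (Suc k) = x k - (\<Sum>j\<le>k. h (Suc k) j *\<^sub>R f (x j))"
    and "k \<le> N"
  shows "x k = x 0 - (\<Sum>i\<le>k. \<Sum>j<i. h i j *\<^sub>R f (x j))"
  using \<open>k \<le> N\<close>
proof (induction k)
  case 0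
  show ?case by simp
next
  case (Suc k)
  then show ?case
    by (simp add: rec lessThan_Suc_atMost)
qed

text \<open>Any cutoff \<open>M > k\<close> works, as the terms with \<open>m > k\<close> vanish; leaving it free lets the
  induction hypothesis be used for every \<open>j < k\<close> with the same cutoff.\<close>
lemma recurrence_solution:
  fixes f :: "'a::real_vector \<Rightarrow> 'a" and x :: "nat \<Rightarrow> 'a"
  assumes "linear f"
    and rec: "\<And>k. k < N \<Longrightarrow> x (Suc k) = x k - (\<Sum>j\<le>k. h (Suc k) j *\<^sub>R f (x j))"
    and "k \<le> N" and "k < M"
  shows "x k = (\<Sum>m<M. ((-1) ^ m * P_coef h k m) *\<^sub>R (f ^^ m) (x 0))"
  using \<open>k \<le> N\<close> \<open>k < M\<close>
proof (induction k arbitrary: M rule: less_induct)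
  case (less k)
  then have "k \<le> N" by simp
  let ?c = "\<lambda>j m. (-1::real) ^ m * P_coef h j m"
  let ?v = "\<lambda>m. (f ^^ m) (x 0)"
  obtain M' where M: "M = Suc M'" and "k \<le> M'"
    using less.prems by (cases M) auto
  have f_x: "f (x j) = (\<Sum>m<M'. ?c j m *\<^sub>R ?v (Suc m))" if "j < k" for j
    using less.IH[of j M'] that less.prems \<open>k \<le> M'\<close>
    by (simp add: linear_sum[OF \<open>linear f\<close>] linear_scale[OF \<open>linear f\<close>])
  have coeff: "(\<Sum>i\<le>k. \<Sum>j<i. h i j * ?c j m) = - ?c k (Suc m)" for m
    by (simp add: P_coef_Suc sum_distrib_left sum_distrib_right sum_negf algebra_simps)
  have "x k = x 0 - (\<Sum>i\<le>k. \<Sum>j<i. h i j *\<^sub>R f (x j))"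
    using rec \<open>k \<le> N\<close> by (rule recurrence_telescoped)
  also have "(\<Sum>i\<le>k. \<Sum>j<i. h i j *\<^sub>R f (x j))
      = (\<Sum>i\<le>k. \<Sum>j<i. h i j *\<^sub>R (\<Sum>m<M'. ?c j m *\<^sub>R ?v (Suc m)))"
    by (intro sum.cong refl) (simp add: f_x)
  also have "\<dots> = (\<Sum>m<M'. (\<Sum>i\<le>k. \<Sum>j<i. h i j * ?c j m) *\<^sub>R ?v (Suc m))"
    by (simp add: scaleR_sum_right scaleR_sum_left sum.swap[where B = "{..<M'}"])
  also have "\<dots> = (\<Sum>m<M'. - ?c k (Suc m) *\<^sub>R ?v (Suc m))"
    unfolding coeff ..
  finally have "x k = ?c k 0 *\<^sub>R ?v 0 + (\<Sum>m<M'. ?c k (Suc m) *\<^sub>R ?v (Suc m))"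
    by (simp add: sum_negf)
  then show ?case
    by (simp only: M sum.lessThan_Suc_shift)
qed

lemma matrix_pow_mult_vec: "matrix_pow A m *v v = ((*v) A ^^ m) v"
  by (induction m) (simp_all add: matrix_vector_mul_assoc[symmetric])

theorem lemmaI2:
  fixes A :: "real^'d^'d" and N :: nat and h :: "nat \<Rightarrow> nat \<Rightarrow> real"
    and x :: "nat \<Rightarrow> real^'d"
  assumes "N \<ge> 1"
    and rec: "\<And>k. k < N \<Longrightarrow>
      x (k + 1) = x k - (\<Sum>j\<le>k. h (k + 1) j *\<^sub>R (A *v x j))"
  shows "\<forall>k\<in>{1..N}. x k = (\<Sum>m\<le>k. ((-1) ^ m * P_coef h k m) *\<^sub>R (matrix_pow A m *v x 0))"
proof
  fix k assume "k \<in> {1..N}"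
  have rec_Suc: "\<And>k. k < N \<Longrightarrow> x (Suc k) = x k - (\<Sum>j\<le>k. h (Suc k) j *\<^sub>R (A *v x j))"
    using rec by simp
  have "x k = (\<Sum>m<Suc k. ((-1) ^ m * P_coef h k m) *\<^sub>R ((*v) A ^^ m) (x 0))"
    using matrix_vector_mul_linear rec_Suc by (rule recurrence_solution) (use \<open>k \<in> {1..N}\<close> in auto)
  then show "x k = (\<Sum>m\<le>k. ((-1) ^ m * P_coef h k m) *\<^sub>R (matrix_pow A m *v x 0))"
    by (simp add: matrix_pow_mult_vec lessThan_Suc_atMost)
qed

end
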